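(* Let $M$ be a system execution satisfying the Lazy Set axioms A0, A1, A2, and let $\Rightarrow$ be the relation defined in the context. For all events $X,Y$, if $X\Rightarrow Y$ then it is not the case that $Y<X$ (equivalently, $\mathrm{Begin}(X)<\mathrm{End}(Y)$).
   Context: A system execution $M$ consists of: a set of events, partitioned into low-level events (actions) and high-level events; unary predicates $\mathrm{Add},\mathrm{Rem},\mathrm{Cnt}$ on events; a partial order $<$ on events in which every event has finitely many predecessors (and Lamport's finiteness property: for every event $x$ there is a finite set $E$ with $x<y$ for all events $y\notin E$); functions $\mathrm{Begin},\mathrm{End}$ from events to actions with $\mathrm{Begin}(e)=\mathrm{End}(e)=e$ for actions $e$; functions $\chi$ (events $\to\{0,1,f\}$), $\mathrm{val}$ (events $\to\mathbb N$), $\gamma$ (events $\to$ events). For events $X,Y$, $X<Y$ iff $\mathrm{End}(X)<\mathrm{Begin}(Y)$. Notation: $\mathrm{Add}^p(a)$ abbreviates $\mathrm{Add}(a)\wedge\chi(a)=p$, similarly $\mathrm{Rem}^p,\mathrm{Cnt}^p$; $\mathrm{Op}^p(a)$ abbreviates $(\mathrm{Add}(a)\vee\mathrm{Rem}(a)\vee\mathrm{Cnt}(a))\wedge\chi(a)=p$ for $p\in\{0,1\}$. A0: $\mathrm{Add},\mathrm{Rem},\mathrm{Cnt}$ pairwise disjoint; $\mathrm{Add},\mathrm{Rem}$ events are actions, $\mathrm{Cnt}$ events are high-level; $\mathrm{Begin}(X),\mathrm{End}(X)$ are actions; for $\mathrm{Cnt}$ events $E$, $\mathrm{Begin}(E)<\mathrm{End}(E)$;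 $<$ restricted to actions is linear. A1: for every $A$ with $\mathrm{Op}^1(A)$: $\mathrm{Add}^0(\gamma(A))$, $\mathrm{val}(\gamma(A))=\mathrm{val}(A)$, $\gamma(A)<\mathrm{End}(A)$, and no $R$ has $\mathrm{Rem}^1(R)$, $\gamma(R)=\gamma(A)$, $\gamma(A)<R<A$. A2: if $\mathrm{Op}^0(B)$, $\mathrm{Add}^0(A)$, $A<B$, $\mathrm{val}(A)=\mathrm{val}(B)$, then some $R$ has $\mathrm{Rem}^1(R)$, $A=\gamma(R)$, $R<\mathrm{End}(B)$. The relation $\Rightarrow$ on events holds exactly in the following cases: (1) for every $\mathrm{Cnt}^1$ event $C$: $\gamma(C)\Rightarrow C$, and $C\Rightarrow R$ for every $R$ with $\mathrm{Rem}^1(R)$ and $\gamma(R)=\gamma(C)$; (2) $R\Rightarrow C$ whenever $\mathrm{Cnt}^0(C)$, $\mathrm{Rem}^1(R)$, $\mathrm{val}(R)=\mathrm{val}(C)$, not $C<R$, and $\gamma(R)<C$; (3) $C\Rightarrow A$ whenever $\mathrm{Cnt}^0(C)$, $\mathrm{Add}^0(A)$, $\mathrm{val}(C)=\mathrm{val}(A)$ and not $A<C$. *)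

theory Defs
  imports Main
begin

datatype chival = X0 | X1 | Xf

text \<open>A system execution. The type 'e is the set of all events of the execution.
  act: low-level events (actions); the rest are high-level events.\<close>
record 'e sysexec =
  act   :: "'e \<Rightarrow> bool"
  Add   :: "'e \<Rightarrow> bool"
  Rem   :: "'e \<Rightarrow> bool"
  Cnt   :: "'e \<Rightarrow> bool"
  lt    :: "'e \<Rightarrow> 'e \<Rightarrow> bool"
  Begin :: "'e \<Rightarrow> 'e"
  End   :: "'e \<Rightarrow> 'e"
  chi   :: "'e \<Rightarrow> chival"
  val   :: "'e \<Rightarrow> nat"
  gam   :: "'e \<Rightarrow> 'e"

definition system_execution :: "'e sysexec \<Rightarrow> bool" where
  "system_execution M \<longleftrightarrow>
     (\<forall>x. \<not> lt M x x) \<and>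
     (\<forall>x y z. lt M x y \<longrightarrow> lt M y z \<longrightarrow> lt M x z) \<and>
     (\<forall>x. finite {y. lt M y x}) \<and>
     (\<forall>x. \<exists>E. finite E \<and> (\<forall>y. y \<notin> E \<longrightarrow> lt M x y)) \<and>
     (\<forall>e. act M e \<longrightarrow> Begin M e = e \<and> End M e = e) \<and>
     (\<forall>X Y. lt M X Y \<longleftrightarrow> lt M (End M X) (Begin M Y))"

abbreviation AddP :: "'e sysexec \<Rightarrow> chival \<Rightarrow> 'e \<Rightarrow> bool" where
  "AddP M p a \<equiv> Add M a \<and> chi M a = p"
abbreviation RemP :: "'e sysexec \<Rightarrow> chival \<Rightarrow> 'e \<Rightarrow> bool" where
  "RemP M p a \<equiv> Rem M a \<and> chi M a = p"
abbreviation CntP :: "'e sysexec \<Rightarrow> chival \<Rightarrow> 'e \<Rightarrow> bool" where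
  "CntP M p a \<equiv> Cnt M a \<and> chi M a = p"
abbreviation OpP :: "'e sysexec \<Rightarrow> chival \<Rightarrow> 'e \<Rightarrow> bool" where
  "OpP M p a \<equiv> (Add M a \<or> Rem M a \<or> Cnt M a) \<and> chi M a = p"

definition A0 :: "'e sysexec \<Rightarrow> bool" where
  "A0 M \<longleftrightarrow>
     (\<forall>e. \<not> (Add M e \<and> Rem M e) \<and> \<not> (Add M e \<and> Cnt M e) \<and> \<not> (Rem M e \<and> Cnt M e)) \<and>
     (\<forall>e. Add M e \<longrightarrow> act M e) \<and> (\<forall>e. Rem M e \<longrightarrow> act M e) \<and>
     (\<forall>e. Cnt M e \<longrightarrow> \<not> act M e) \<and>
     (\<forall>X. act M (Begin M X) \<and> act M (End M X)) \<and>
     (\<forall>E. Cnt M E \<longrightarrow> lt M (Begin M E) (End M E)) \<and>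
     (\<forall>a b. act M a \<longrightarrow> act M b \<longrightarrow> a = b \<or> lt M a b \<or> lt M b a)"

definition A1 :: "'e sysexec \<Rightarrow> bool" where
  "A1 M \<longleftrightarrow>
     (\<forall>A. OpP M X1 A \<longrightarrow>
        AddP M X0 (gam M A) \<and> val M (gam M A) = val M A \<and> lt M (gam M A) (End M A) \<and>
        \<not> (\<exists>R. RemP M X1 R \<and> gam M R = gam M A \<and> lt M (gam M A) R \<and> lt M R A))"

definition A2 :: "'e sysexec \<Rightarrow> bool" where
  "A2 M \<longleftrightarrow>
     (\<forall>A B. OpP M X0 B \<longrightarrow> AddP M X0 A \<longrightarrow> lt M A B \<longrightarrow> val M A = val M B \<longrightarrow>
        (\<exists>R. RemP M X1 R \<and> A = gam M R \<and> lt M R (End M B)))"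

definition arrow :: "'e sysexec \<Rightarrow> 'e \<Rightarrow> 'e \<Rightarrow> bool" where
  "arrow M X Y \<longleftrightarrow>
     (CntP M X1 Y \<and> X = gam M Y) \<or>
     (CntP M X1 X \<and> RemP M X1 Y \<and> gam M Y = gam M X) \<or>
     (CntP M X0 Y \<and> RemP M X1 X \<and> val M X = val M Y \<and> \<not> lt M Y X \<and> lt M (gam M X) Y) \<or>
     (CntP M X0 X \<and> AddP M X0 Y \<and> val M X = val M Y \<and> \<not> lt M Y X)"

end

theory Submission
  imports Defs
begin

text \<open>Cases (2) and (3) of the relation exclude \<open>Y < X\<close> by definition. In case (1) everything
  follows from A1: the add \<open>\<gamma>(A)\<close> read by a successful operation \<open>A\<close> precedes \<open>End(A)\<close>, so
  \<open>A < \<gamma>(A)\<close> is impossible; and a successful remove \<open>R\<close> of \<open>\<gamma>(A)\<close> satisfies \<open>\<gamma>(A) < R\<close>,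
  so \<open>R < A\<close> would place \<open>R\<close> strictly between \<open>\<gamma>(A)\<close> and \<open>A\<close>, which A1 forbids.\<close>

lemma system_execution_lt_irrefl: "system_execution M \<Longrightarrow> \<not> lt M x x"
  unfolding system_execution_def by blast

lemma system_execution_lt_trans: "system_execution M \<Longrightarrow> lt M x y \<Longrightarrow> lt M y z \<Longrightarrow> lt M x z"
  unfolding system_execution_def by blast

lemma system_execution_lt_iff: "system_execution M \<Longrightarrow> lt M X Y \<longleftrightarrow> lt M (End M X) (Begin M Y)"
  unfolding system_execution_def by blast

lemma system_execution_Begin_act: "system_execution M \<Longrightarrow> act M e \<Longrightarrow> Begin M e = e"
  and system_execution_End_act: "system_execution M \<Longrightarrow> act M e \<Longrightarrow> End M e = e"
  unfolding system_execution_def by blast+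

lemma A0_Add_act: "A0 M \<Longrightarrow> Add M e \<Longrightarrow> act M e"
  and A0_Rem_act: "A0 M \<Longrightarrow> Rem M e \<Longrightarrow> act M e"
  unfolding A0_def by blast+

lemma A1_gam_lt_End:
  assumes "A1 M" and "OpP M X1 A"
  shows "AddP M X0 (gam M A)" and "lt M (gam M A) (End M A)"
  using assms unfolding A1_def by blast+

lemma A1_no_Rem_between:
  assumes "A1 M" and "OpP M X1 A" and "RemP M X1 R" and "gam M R = gam M A"
  shows "\<not> (lt M (gam M A) R \<and> lt M R A)"
  using assms unfolding A1_def by blast

lemma Op1_not_lt_gam:
  assumes M: "system_execution M" "A0 M" "A1 M" and A: "OpP M X1 A"
  shows "\<not> lt M A (gam M A)"
proof
  assume "lt M A (gam M A)"
  moreover have "act M (gam M A)"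
    using A0_Add_act[OF M(2)] A1_gam_lt_End(1)[OF M(3) A] by blast
  ultimately have "lt M (End M A) (gam M A)"
    using system_execution_lt_iff system_execution_Begin_act M(1) by metis
  with A1_gam_lt_End(2)[OF M(3) A] show False
    using system_execution_lt_trans system_execution_lt_irrefl M(1) by metis
qed

lemma Rem1_of_gam_not_lt_Op1:
  assumes M: "system_execution M" "A0 M" "A1 M"
    and A: "OpP M X1 A" and R: "RemP M X1 R" and gam_eq: "gam M R = gam M A"
  shows "\<not> lt M R A"
proof -
  have "lt M (gam M R) (End M R)"
    using A1_gam_lt_End(2)[OF M(3)] R by blast
  moreover have "End M R = R"
    using system_execution_End_act[OF M(1)] A0_Rem_act[OF M(2)] R by blast
  ultimately have "lt M (gam M A) R"
    using gam_eq by simp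
  then show ?thesis
    using A1_no_Rem_between[OF M(3) A R gam_eq] by blast
qed

theorem lemma3p6:
  fixes M :: "'e sysexec"
  assumes "system_execution M" and "A0 M" and "A1 M" and "A2 M"
  shows "\<forall>X Y. arrow M X Y \<longrightarrow> \<not> lt M Y X"
proof (intro allI impI)
  fix X Y
  assume "arrow M X Y"
  then consider "CntP M X1 Y" "X = gam M Y"
    | "CntP M X1 X" "RemP M X1 Y" "gam M Y = gam M X"
    | "\<not> lt M Y X"
    unfolding arrow_def by blast
  then show "\<not> lt M Y X"
  proof cases
    case 1
    then show ?thesis
      using Op1_not_lt_gam[OF assms(1-3)] by blast
  next
    case 2
    then show ?thesis
      using Rem1_of_gam_not_lt_Op1[OF assms(1-3)] by blast
  qed
qed

end
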